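(* Let $c>\frac12$ and $\delta>0$ be fixed. Let $\ell\ge4$ and let $\ell_1,\ell_2,\ell_3,\ell_4$ be positive integers with $\ell_1+\ell_2+\ell_3+\ell_4=\ell$. Then there exist constants $K>0$ and $0<\rho<1$, depending only on $\ell,c,\delta$ (not on $n$), such that for all $n\ge1$ $$V_n^{-2\ell c}\int_{\mathbb R^n}\int_{\mathbb R^n}f^*_{c,\delta}(\mathbf x_1)^{\ell_1}f^*_{c,\delta}(\mathbf x_2)^{\ell_2}f^*_{c,\delta}(\mathbf x_1+\mathbf x_2)^{\ell_3}f^*_{c,\delta}(\mathbf x_1-\mathbf x_2)^{\ell_4}\,d\mathbf x_1\,d\mathbf x_2\le K\rho^n.$$
   Context: $V_n=\pi^{n/2}/\Gamma(\frac n2+1)$ is the volume of the unit ball in $\mathbb R^n$, $R_n(\delta)=(\delta/V_n)^{1/n}$, and $f^*_{c,\delta}:\mathbb R^n\to\mathbb R$ is $f^*_{c,\delta}(\mathbf x)=\big(|\mathbf x|^n+R_n(\delta)^n\big)^{-2c}$ (this is the spherical symmetrization of $\mathbf x\mapsto|\mathbf x|^{-2cn}\mathbf 1_{|\mathbf x|>R_n(\delta)}$). *)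

theory Defs
  imports "HOL-Analysis.Analysis" "HOL-Probability.Probability"
begin

text \<open>Points of R^n are modelled as functions nat => real restricted to indices below n;
  Lebesgue measure on R^n is the product measure PiM {..<n} (%_. lborel).\<close>

definition lebesgue_n :: "nat \<Rightarrow> (nat \<Rightarrow> real) measure" where
  "lebesgue_n n = PiM {..<n} (\<lambda>_. lborel)"

definition enorm_n :: "nat \<Rightarrow> (nat \<Rightarrow> real) \<Rightarrow> real" where
  "enorm_n n x = sqrt (\<Sum>i<n. (x i)\<^sup>2)"

definition vadd :: "(nat \<Rightarrow> real) \<Rightarrow> (nat \<Rightarrow> real) \<Rightarrow> nat \<Rightarrow> real" where
  "vadd x y = (\<lambda>i. x i + y i)"

definition vsub :: "(nat \<Rightarrow> real) \<Rightarrow> (nat \<Rightarrow> real) \<Rightarrow> nat \<Rightarrow> real" where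
  "vsub x y = (\<lambda>i. x i - y i)"

text \<open>Volume of the unit ball in R^n.\<close>
definition V :: "nat \<Rightarrow> real" where
  "V n = pi powr (real n / 2) / Gamma (real n / 2 + 1)"

definition R :: "nat \<Rightarrow> real \<Rightarrow> real" where
  "R n \<delta> = (\<delta> / V n) powr (1 / real n)"

definition fstar :: "nat \<Rightarrow> real \<Rightarrow> real \<Rightarrow> (nat \<Rightarrow> real) \<Rightarrow> real" where
  "fstar n c \<delta> x = ((enorm_n n x) ^ n + (R n \<delta>) ^ n) powr (-2 * c)"

end

theory Submission
  imports Defs "HOL-Real_Asymp.Real_Asymp"
begin

text \<open>
  After factoring out \<open>V_n^(2c)\<close>, which the normalisation cancels, \<open>f*\<close> becomes the radial
  profile \<open>g(x) = (V_n |x|^n + \<delta>)^(-2c)\<close>, bounded by \<open>\<delta>^(-2c)\<close>. By the parallelogram law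
  \<open>max(|x1 + x2|, |x1 - x2|) \<ge> sqrt 2 * min(|x1|, |x2|)\<close>, so the smaller of the two factors at
  \<open>x1 \<plusminus> x2\<close> is at most \<open>g(sqrt 2 x1) + g(sqrt 2 x2)\<close>. Bounding all remaining factors but one
  by \<open>\<delta>^(-2c)\<close> dominates the integrand by a constant times
  \<open>g(x2) g(sqrt 2 x1) + g(x1) g(sqrt 2 x2)\<close>. The layer-cake formula together with the ball
  volume \<open>V_n r^n\<close> gives \<open>\<integral> g(s x) dx \<le> C s^(-n)\<close> with \<open>C\<close> independent of \<open>n\<close>, so the
  double integral is \<open>O(2^(-n/2))\<close>.
\<close>

lemma powr_one_over_power: "0 < a \<Longrightarrow> 1 \<le> n \<Longrightarrow> (a powr (1 / real n)) ^ n = (a::real)"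
  by (simp add: powr_realpow[symmetric] powr_powr)

lemma V_eq_unit_ball_vol: "V n = unit_ball_vol (real n)"
  by (simp add: V_def unit_ball_vol_def)

lemma V_pos: "0 < V n"
  by (simp add: V_eq_unit_ball_vol)

lemma enorm_n_nonneg: "0 \<le> enorm_n n x"
  by (simp add: enorm_n_def sum_nonneg)

lemma borel_measurable_enorm_n [measurable]: "enorm_n n \<in> borel_measurable (lebesgue_n n)"
  unfolding enorm_n_def lebesgue_n_def by measurable

lemma sigma_finite_lebesgue_n: "sigma_finite_measure (lebesgue_n n)"
  unfolding lebesgue_n_def
  by (rule product_sigma_finite.sigma_finite)
     (auto simp: product_sigma_finite_def intro: lborel.sigma_finite_measure_axioms)

lemma emeasure_lebesgue_n_enorm_le:
  assumes "0 < r"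
  shows "emeasure (lebesgue_n n) {x \<in> space (lebesgue_n n). enorm_n n x \<le> r} = ennreal (V n * r ^ n)"
proof -
  have "{x \<in> space (lebesgue_n n). enorm_n n x \<le> r}
      = {f. sqrt (\<Sum>i\<in>{..<n}. (f i)\<^sup>2) \<le> r} \<inter> space (Pi\<^sub>M {..<n} (\<lambda>_. lborel))"
    by (auto simp: enorm_n_def lebesgue_n_def)
  then show ?thesis
    using emeasure_cball_aux[of "{..<n}" r] assms by (simp add: lebesgue_n_def V_eq_unit_ball_vol)
qed

lemma nn_integral_powr_atLeast:
  fixes q a \<delta> :: real
  assumes q: "1 < q" and a: "0 < a + \<delta>"
  shows "(\<integral>\<^sup>+t. ennreal ((t + \<delta>) powr (-q)) * indicator {a..} t \<partial>lborel)
       = ennreal ((a + \<delta>) powr (1 - q) / (q - 1))"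
proof -
  define F where "F t = - ((t + \<delta>) powr (1 - q) / (q - 1))" for t
  have "(\<integral>\<^sup>+t. ennreal ((t + \<delta>) powr (-q)) * indicator {a..} t \<partial>lborel) = 0 - F a"
  proof (rule nn_integral_FTC_atLeast)
    show "(F \<longlongrightarrow> 0) at_top"
      unfolding F_def using q by real_asymp
  next
    fix t assume "a \<le> t"
    then have "0 < t + \<delta>" using a by linarith
    then have "((\<lambda>t. (t + \<delta>) powr (1 - q)) has_real_derivative (1 - q) * (t + \<delta>) powr (-q)) (at t)"
      by (auto intro!: derivative_eq_intros)
    then have "(F has_real_derivative - ((1 - q) * (t + \<delta>) powr (-q) / (q - 1))) (at t)"
      unfolding F_def by (intro DERIV_minus DERIV_cdivide)
    moreover have "- ((1 - q) * (t + \<delta>) powr (-q) / (q - 1)) = (t + \<delta>) powr (-q)"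
      using q by (simp add: divide_simps algebra_simps)
    ultimately show "(F has_real_derivative (t + \<delta>) powr (-q)) (at t)"
      by simp
  qed auto
  then show ?thesis by (simp add: F_def)
qed

lemma nn_integral_deriv_powr_atLeast:
  fixes p a \<delta> :: real
  assumes p: "0 < p" and a: "0 < a + \<delta>"
  shows "(\<integral>\<^sup>+t. ennreal (p * (t + \<delta>) powr (-p - 1)) * indicator {a..} t \<partial>lborel)
       = ennreal ((a + \<delta>) powr (-p))"
proof -
  have "(\<integral>\<^sup>+t. ennreal (p * (t + \<delta>) powr (-p - 1)) * indicator {a..} t \<partial>lborel)
      = ennreal p * (\<integral>\<^sup>+t. ennreal ((t + \<delta>) powr (-(p + 1))) * indicator {a..} t \<partial>lborel)"
    using p by (subst nn_integral_cmult[symmetric]) (auto simp: ennreal_mult mult.assoc intro!: nn_integral_cong)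
  also have "\<dots> = ennreal p * ennreal ((a + \<delta>) powr (-p) / p)"
    using nn_integral_powr_atLeast[of "p + 1" a \<delta>] p a by simp
  finally show ?thesis
    using p by (simp add: ennreal_mult[symmetric])
qed

text \<open>Write \<open>(u x + \<delta>)\<^sup>-\<^sup>p\<close> as \<open>\<integral>\<^bsub>t \<ge> u x\<^esub> p (t + \<delta>)\<^sup>-\<^sup>p\<^sup>-\<^sup>1 dt\<close> and exchange the integrals.\<close>

lemma nn_integral_powr_layer_cake:
  fixes u :: "'a \<Rightarrow> real"
  assumes "sigma_finite_measure M" and [measurable]: "u \<in> borel_measurable M"
    and u: "\<And>x. 0 \<le> u x" and p: "0 < p" and \<delta>: "0 < \<delta>"
  shows "(\<integral>\<^sup>+x. ennreal ((u x + \<delta>) powr (-p)) \<partial>M)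
       = (\<integral>\<^sup>+t. ennreal (p * (t + \<delta>) powr (-p - 1)) * emeasure M {x \<in> space M. u x \<le> t} \<partial>lborel)"
proof -
  interpret pair_sigma_finite M lborel
    using assms(1) by (simp add: pair_sigma_finite_def lborel.sigma_finite_measure_axioms)
  define k where "k t = p * (t + \<delta>) powr (-p - 1)" for t :: real
  have [measurable]: "k \<in> borel_measurable borel"
    unfolding k_def by measurable
  have "(\<integral>\<^sup>+x. ennreal ((u x + \<delta>) powr (-p)) \<partial>M)
      = (\<integral>\<^sup>+x. \<integral>\<^sup>+t. ennreal (k t) * indicator {u x..} t \<partial>lborel \<partial>M)"
    using nn_integral_deriv_powr_atLeast[OF p] u \<delta>
    by (intro nn_integral_cong) (simp add: k_def add_nonneg_pos)
  also have "\<dots> = (\<integral>\<^sup>+t. \<integral>\<^sup>+x. ennreal (k t) * indicator {u x..} t \<partial>M \<partial>lborel)"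
  proof (rule Fubini'[symmetric])
    have "(\<lambda>z. ennreal (k (snd z)) * indicator {z. u (fst z) \<le> snd z} z) \<in> borel_measurable (M \<Otimes>\<^sub>M lborel)"
      by measurable
    then show "case_prod (\<lambda>x t. ennreal (k t) * indicator {u x..} t) \<in> borel_measurable (M \<Otimes>\<^sub>M lborel)"
      by (rule measurable_cong[THEN iffD1, rotated]) (auto simp: indicator_def)
  qed
  also have "\<dots> = (\<integral>\<^sup>+t. ennreal (k t) * emeasure M {x \<in> space M. u x \<le> t} \<partial>lborel)"
  proof (intro nn_integral_cong)
    fix t :: real
    have "(\<integral>\<^sup>+x. ennreal (k t) * indicator {u x..} t \<partial>M)
        = (\<integral>\<^sup>+x. ennreal (k t) * indicator {x \<in> space M. u x \<le> t} x \<partial>M)"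
      by (intro nn_integral_cong) (auto simp: indicator_def)
    also have "\<dots> = ennreal (k t) * emeasure M {x \<in> space M. u x \<le> t}"
      by (rule nn_integral_cmult_indicator) measurable
    finally show "(\<integral>\<^sup>+x. ennreal (k t) * indicator {u x..} t \<partial>M)
        = ennreal (k t) * emeasure M {x \<in> space M. u x \<le> t}" .
  qed
  finally show ?thesis
    unfolding k_def .
qed

lemma emeasure_lebesgue_n_scaled_enorm_le:
  assumes n: "1 \<le> n" and s: "0 < s" and t: "0 < t"
  shows "emeasure (lebesgue_n n) {x \<in> space (lebesgue_n n). V n * (s * enorm_n n x) ^ n \<le> t}
       = ennreal (t / s ^ n)"
proof -
  define r where "r = (t / V n) powr (1 / real n) / s"
  have r: "0 < r"
    using t s V_pos[of n] by (simp add: r_def)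
  have rn: "V n * (s * r) ^ n = t"
    using t s n V_pos[of n] by (simp add: r_def powr_one_over_power)
  have "V n * (s * enorm_n n x) ^ n \<le> t \<longleftrightarrow> enorm_n n x \<le> r" for x
  proof -
    have "V n * (s * enorm_n n x) ^ n \<le> V n * (s * r) ^ n \<longleftrightarrow> s * enorm_n n x \<le> s * r"
      using V_pos[of n] s r n enorm_n_nonneg[of n x] by (simp add: power_mono_iff)
    then show ?thesis
      using s rn by simp
  qed
  then have "{x \<in> space (lebesgue_n n). V n * (s * enorm_n n x) ^ n \<le> t}
           = {x \<in> space (lebesgue_n n). enorm_n n x \<le> r}"
    by auto
  moreover have "V n * r ^ n = t / s ^ n"
    using rn s by (simp add: power_mult_distrib field_simps)
  ultimately show ?thesis
    using emeasure_lebesgue_n_enorm_le[OF r] by simp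
qed

lemma nn_integral_lebesgue_n_radial_powr_le:
  assumes n: "1 \<le> n" and s: "0 < s" and p: "1 < p" and \<delta>: "0 < \<delta>"
  shows "(\<integral>\<^sup>+x. ennreal ((V n * (s * enorm_n n x) ^ n + \<delta>) powr (-p)) \<partial>lebesgue_n n)
       \<le> ennreal (p / s ^ n * (\<delta> powr (1 - p) / (p - 1)))"
proof -
  let ?M = "lebesgue_n n"
  define u where "u x = V n * (s * enorm_n n x) ^ n" for x
  have [measurable]: "u \<in> borel_measurable ?M"
    unfolding u_def by measurable
  have u: "0 \<le> u x" for x
    using V_pos[of n] s enorm_n_nonneg[of n x] by (simp add: u_def)
  have "(\<integral>\<^sup>+x. ennreal ((u x + \<delta>) powr (-p)) \<partial>?M)
      = (\<integral>\<^sup>+t. ennreal (p * (t + \<delta>) powr (-p - 1)) * emeasure ?M {x \<in> space ?M. u x \<le> t} \<partial>lborel)"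
    using p \<delta> u by (intro nn_integral_powr_layer_cake sigma_finite_lebesgue_n) auto
  also have "\<dots> \<le> (\<integral>\<^sup>+t. ennreal (p / s ^ n) * (ennreal ((t + \<delta>) powr (-p)) * indicator {0..} t) \<partial>lborel)"
  proof (rule nn_integral_mono_AE)
    show "AE t in lborel. ennreal (p * (t + \<delta>) powr (-p - 1)) * emeasure ?M {x \<in> space ?M. u x \<le> t}
        \<le> ennreal (p / s ^ n) * (ennreal ((t + \<delta>) powr (-p)) * indicator {0..} t)"
      using AE_lborel_singleton[of 0]
    proof eventually_elim
      fix t :: real assume "t \<noteq> 0"
      show "ennreal (p * (t + \<delta>) powr (-p - 1)) * emeasure ?M {x \<in> space ?M. u x \<le> t}
          \<le> ennreal (p / s ^ n) * (ennreal ((t + \<delta>) powr (-p)) * indicator {0..} t)"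
      proof (cases "0 < t")
        case False
        with \<open>t \<noteq> 0\<close> have empty: "{x \<in> space ?M. u x \<le> t} = {}"
          using u by (auto simp: not_less intro: antisym order.trans)
        show ?thesis
          unfolding empty by simp
      next
        case True
        have "(t + \<delta>) powr (-p - 1) * t \<le> (t + \<delta>) powr (-p - 1) * (t + \<delta>)"
          using \<delta> by (intro mult_left_mono) auto
        also have "\<dots> = (t + \<delta>) powr (-p)"
          using True \<delta> by (simp add: powr_diff)
        finally have "p * (t + \<delta>) powr (-p - 1) * (t / s ^ n) \<le> p / s ^ n * (t + \<delta>) powr (-p)"
          using p s by (simp add: field_simps mult_left_mono)
        then show ?thesis
          using True p s \<delta> emeasure_lebesgue_n_scaled_enorm_le[OF n s True]
          by (simp add: u_def ennreal_mult'[symmetric])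
      qed
    qed
  qed
  also have "\<dots> = ennreal (p / s ^ n) * (\<integral>\<^sup>+t. ennreal ((t + \<delta>) powr (-p)) * indicator {0..} t \<partial>lborel)"
    by (rule nn_integral_cmult) measurable
  also have "\<dots> = ennreal (p / s ^ n) * ennreal (\<delta> powr (1 - p) / (p - 1))"
    using nn_integral_powr_atLeast[of p 0 \<delta>] p \<delta> by simp
  also have "\<dots> = ennreal (p / s ^ n * (\<delta> powr (1 - p) / (p - 1)))"
    using p s by (intro ennreal_mult'[symmetric]) simp
  finally show ?thesis
    unfolding u_def .
qed

lemma power_le_mult_power_pred:
  fixes a b :: "'a :: linordered_semidom"
  assumes "0 \<le> a" "a \<le> b" "1 \<le> k"
  shows "a ^ k \<le> a * b ^ (k - 1)"
proof -
  have "a ^ k = a * a ^ (k - 1)"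
    using assms(3) by (simp add: power_eq_if)
  also have "\<dots> \<le> a * b ^ (k - 1)"
    using assms by (intro mult_left_mono power_mono) auto
  finally show ?thesis .
qed

lemma four_powers_le:
  fixes a1 a2 a3 a4 b1 b2 d :: real
  assumes a: "0 \<le> a1" "a1 \<le> d" "0 \<le> a2" "a2 \<le> d" "0 \<le> a3" "a3 \<le> d" "0 \<le> a4" "a4 \<le> d"
    and b: "0 \<le> b1" "0 \<le> b2" "min a3 a4 \<le> b1 + b2"
    and k: "0 < k1" "0 < k2" "0 < k3" "0 < k4"
  shows "a1 ^ k1 * a2 ^ k2 * a3 ^ k3 * a4 ^ k4 \<le> d ^ (k1 + k2 + k3 + k4 - 2) * (a2 * b1 + a1 * b2)"
proof -
  have d: "0 \<le> d"
    using a by linarith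
  have "a1 ^ k1 * a2 ^ k2 * a3 ^ k3 * a4 ^ k4
      \<le> (a1 * d ^ (k1 - 1)) * (a2 * d ^ (k2 - 1)) * (a3 * d ^ (k3 - 1)) * (a4 * d ^ (k4 - 1))"
    using a k by (intro mult_mono power_le_mult_power_pred) auto
  also have "\<dots> = a1 * a2 * (a3 * a4) * d ^ (k1 + k2 + k3 + k4 - 4)"
  proof -
    have "(k1 - 1) + (k2 - 1) + (k3 - 1) + (k4 - 1) = k1 + k2 + k3 + k4 - 4"
      using k by arith
    then show ?thesis
      by (simp add: power_add[symmetric] algebra_simps)
  qed
  also have "\<dots> \<le> a1 * a2 * (d * (b1 + b2)) * d ^ (k1 + k2 + k3 + k4 - 4)"
  proof -
    have "a3 * a4 \<le> d * min a3 a4"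
    proof (cases "a3 \<le> a4")
      case True
      have "a3 * a4 \<le> a3 * d"
        using a by (intro mult_left_mono) auto
      with True show ?thesis by (simp add: mult.commute)
    next
      case False
      have "a3 * a4 \<le> d * a4"
        using a by (intro mult_right_mono) auto
      with False show ?thesis by simp
    qed
    also have "\<dots> \<le> d * (b1 + b2)"
      using b d by (intro mult_left_mono) auto
    finally show ?thesis
      using a d by (intro mult_right_mono mult_left_mono) auto
  qed
  also have "\<dots> \<le> d * (d * (a2 * b1 + a1 * b2)) * d ^ (k1 + k2 + k3 + k4 - 4)"
  proof -
    have "a1 * (a2 * b1) \<le> d * (a2 * b1)" "a2 * (a1 * b2) \<le> d * (a1 * b2)"
      using a b by (simp_all add: mult_right_mono)
    then have "a1 * a2 * (b1 + b2) \<le> d * (a2 * b1 + a1 * b2)"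
      by (simp add: algebra_simps)
    then have "d * (a1 * a2 * (b1 + b2)) \<le> d * (d * (a2 * b1 + a1 * b2))"
      using d by (rule mult_left_mono)
    then show ?thesis
      using d by (intro mult_right_mono) (simp_all add: ac_simps)
  qed
  also have "\<dots> = d ^ (k1 + k2 + k3 + k4 - 2) * (a2 * b1 + a1 * b2)"
  proof -
    have "k1 + k2 + k3 + k4 - 2 = Suc (Suc (k1 + k2 + k3 + k4 - 4))"
      using k by arith
    then show ?thesis
      by (simp add: algebra_simps)
  qed
  finally show ?thesis .
qed

definition fstar_profile :: "nat \<Rightarrow> real \<Rightarrow> real \<Rightarrow> real \<Rightarrow> real" where
  "fstar_profile n c \<delta> r = (V n * r ^ n + \<delta>) powr (-2 * c)"

lemma fstar_eq_fstar_profile: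
  assumes "0 < \<delta>" "1 \<le> n"
  shows "fstar n c \<delta> x = V n powr (2 * c) * fstar_profile n c \<delta> (enorm_n n x)"
proof -
  have V: "0 < V n"
    by (rule V_pos)
  have "R n \<delta> ^ n = \<delta> / V n"
    unfolding R_def using assms V by (intro powr_one_over_power) auto
  then have "fstar n c \<delta> x = ((V n * enorm_n n x ^ n + \<delta>) / V n) powr (-2 * c)"
    using V by (simp add: fstar_def add_divide_distrib)
  also have "\<dots> = (V n * enorm_n n x ^ n + \<delta>) powr (-2 * c) / V n powr (-2 * c)"
    by (rule powr_divide)
  also have "\<dots> = V n powr (2 * c) * fstar_profile n c \<delta> (enorm_n n x)"
    by (simp add: fstar_profile_def powr_minus divide_inverse)
  finally show ?thesis .
qed

lemma fstar_profile_pos: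
  assumes "0 < \<delta>" "0 \<le> r"
  shows "0 < fstar_profile n c \<delta> r"
proof -
  have "0 < V n * r ^ n + \<delta>"
    using assms V_pos[of n] by (intro add_nonneg_pos mult_nonneg_nonneg) auto
  then show ?thesis
    by (simp add: fstar_profile_def)
qed

lemma fstar_profile_antimono:
  assumes "0 \<le> c" "0 < \<delta>" "0 \<le> r" "r \<le> r'"
  shows "fstar_profile n c \<delta> r' \<le> fstar_profile n c \<delta> r"
  unfolding fstar_profile_def
  using assms V_pos[of n] by (intro powr_mono2') (auto simp: add_nonneg_pos power_mono)

lemma fstar_profile_le:
  assumes "0 \<le> c" "0 < \<delta>" "0 \<le> r" "1 \<le> n"
  shows "fstar_profile n c \<delta> r \<le> \<delta> powr (-2 * c)"
  using fstar_profile_antimono[of c \<delta> 0 r n] assms by (simp add: fstar_profile_def power_0_left)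

lemma enorm_n_parallelogram:
  "(enorm_n n (vadd x y))\<^sup>2 + (enorm_n n (vsub x y))\<^sup>2 = 2 * (enorm_n n x)\<^sup>2 + 2 * (enorm_n n y)\<^sup>2"
proof -
  have "(\<Sum>i<n. (x i + y i)\<^sup>2) + (\<Sum>i<n. (x i - y i)\<^sup>2) = 2 * (\<Sum>i<n. (x i)\<^sup>2) + 2 * (\<Sum>i<n. (y i)\<^sup>2)"
    by (simp add: sum.distrib[symmetric] sum_distrib_left power2_eq_square algebra_simps)
  then show ?thesis
    by (simp add: enorm_n_def vadd_def vsub_def sum_nonneg)
qed

lemma sqrt2_min_enorm_n_le_max:
  "sqrt 2 * min (enorm_n n x) (enorm_n n y) \<le> max (enorm_n n (vadd x y)) (enorm_n n (vsub x y))"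
proof (rule power2_le_imp_le)
  have "(sqrt 2 * min (enorm_n n x) (enorm_n n y))\<^sup>2 \<le> (enorm_n n x)\<^sup>2 + (enorm_n n y)\<^sup>2"
    using enorm_n_nonneg[of n x] enorm_n_nonneg[of n y]
    by (auto simp: min_def power_mult_distrib intro: add_mono power_mono)
  also have "\<dots> = ((enorm_n n (vadd x y))\<^sup>2 + (enorm_n n (vsub x y))\<^sup>2) / 2"
    using enorm_n_parallelogram[of n x y] by simp
  also have "\<dots> \<le> (max (enorm_n n (vadd x y)) (enorm_n n (vsub x y)))\<^sup>2"
    using enorm_n_nonneg[of n "vadd x y"] enorm_n_nonneg[of n "vsub x y"]
    by (auto simp: max_def intro: power_mono)
  finally show "(sqrt 2 * min (enorm_n n x) (enorm_n n y))\<^sup>2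
      \<le> (max (enorm_n n (vadd x y)) (enorm_n n (vsub x y)))\<^sup>2" .
qed (simp add: enorm_n_nonneg le_max_iff_disj)

lemma min_fstar_profile_le:
  assumes c: "0 \<le> c" and \<delta>: "0 < \<delta>"
  shows "min (fstar_profile n c \<delta> (enorm_n n (vadd x y))) (fstar_profile n c \<delta> (enorm_n n (vsub x y)))
       \<le> fstar_profile n c \<delta> (sqrt 2 * enorm_n n x) + fstar_profile n c \<delta> (sqrt 2 * enorm_n n y)"
proof -
  let ?G = "fstar_profile n c \<delta>"
  let ?m = "min (enorm_n n x) (enorm_n n y)"
  let ?M = "max (enorm_n n (vadd x y)) (enorm_n n (vsub x y))"
  have "min (?G (enorm_n n (vadd x y))) (?G (enorm_n n (vsub x y))) = ?G ?M"
  proof (cases "enorm_n n (vadd x y) \<le> enorm_n n (vsub x y)")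
    case True
    then have "?G (enorm_n n (vsub x y)) \<le> ?G (enorm_n n (vadd x y))"
      by (intro fstar_profile_antimono[OF c \<delta> enorm_n_nonneg])
    with True show ?thesis
      by (simp add: min_absorb2 max_absorb2)
  next
    case False
    then have "?G (enorm_n n (vadd x y)) \<le> ?G (enorm_n n (vsub x y))"
      by (intro fstar_profile_antimono[OF c \<delta> enorm_n_nonneg]) simp
    with False show ?thesis
      by (simp add: min_absorb1 max_absorb1)
  qed
  also have "\<dots> \<le> ?G (sqrt 2 * ?m)"
    using fstar_profile_antimono[OF c \<delta>] sqrt2_min_enorm_n_le_max enorm_n_nonneg by simp
  also have "\<dots> \<le> ?G (sqrt 2 * enorm_n n x) + ?G (sqrt 2 * enorm_n n y)"
    using fstar_profile_pos[OF \<delta>] enorm_n_nonneg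
    by (auto simp: min_def less_imp_le)
  finally show ?thesis .
qed

lemma fstar_product_le:
  assumes c: "0 \<le> c" and \<delta>: "0 < \<delta>" and n: "1 \<le> n"
    and l: "0 < l1" "0 < l2" "0 < l3" "0 < l4" "l1 + l2 + l3 + l4 = l"
  shows "fstar n c \<delta> x1 ^ l1 * fstar n c \<delta> x2 ^ l2 * fstar n c \<delta> (vadd x1 x2) ^ l3 * fstar n c \<delta> (vsub x1 x2) ^ l4
       \<le> (V n powr (2 * c)) ^ l * (\<delta> powr (-2 * c)) ^ (l - 2)
         * (fstar_profile n c \<delta> (enorm_n n x2) * fstar_profile n c \<delta> (sqrt 2 * enorm_n n x1)
          + fstar_profile n c \<delta> (enorm_n n x1) * fstar_profile n c \<delta> (sqrt 2 * enorm_n n x2))"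
proof -
  let ?g = "\<lambda>x. fstar_profile n c \<delta> (enorm_n n x)"
  have "fstar n c \<delta> x1 ^ l1 * fstar n c \<delta> x2 ^ l2 * fstar n c \<delta> (vadd x1 x2) ^ l3 * fstar n c \<delta> (vsub x1 x2) ^ l4
      = (V n powr (2 * c)) ^ l * (?g x1 ^ l1 * ?g x2 ^ l2 * ?g (vadd x1 x2) ^ l3 * ?g (vsub x1 x2) ^ l4)"
    unfolding l(5)[symmetric] by (simp add: fstar_eq_fstar_profile[OF \<delta> n] power_mult_distrib power_add)
  also have "\<dots> \<le> (V n powr (2 * c)) ^ l * ((\<delta> powr (-2 * c)) ^ (l - 2)
         * (?g x2 * fstar_profile n c \<delta> (sqrt 2 * enorm_n n x1) + ?g x1 * fstar_profile n c \<delta> (sqrt 2 * enorm_n n x2)))"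
    unfolding l(5)[symmetric]
    using fstar_profile_pos[OF \<delta>] fstar_profile_le[OF c \<delta> _ n] enorm_n_nonneg
      min_fstar_profile_le[OF c \<delta>, of n x1 x2] l
    by (intro mult_left_mono four_powers_le) (auto intro: less_imp_le)
  finally show ?thesis
    by (simp only: mult.assoc)
qed

lemma nn_integral_symmetric_product:
  assumes [measurable]: "f \<in> borel_measurable M" "g \<in> borel_measurable M"
    and f: "\<And>x. 0 \<le> f x" and g: "\<And>x. 0 \<le> g x"
  shows "(\<integral>\<^sup>+x. \<integral>\<^sup>+y. ennreal (f y * g x + f x * g y) \<partial>M \<partial>M)
       = 2 * (\<integral>\<^sup>+x. f x \<partial>M) * (\<integral>\<^sup>+x. g x \<partial>M)"
proof -
  let ?F = "\<integral>\<^sup>+x. f x \<partial>M" and ?G = "\<integral>\<^sup>+x. g x \<partial>M"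
  have split: "ennreal (f y * g x + f x * g y) = ennreal (g x) * ennreal (f y) + ennreal (f x) * ennreal (g y)"
    for x y
    using f g by (simp add: ennreal_plus ennreal_mult mult.commute)
  have "(\<integral>\<^sup>+x. \<integral>\<^sup>+y. ennreal (f y * g x + f x * g y) \<partial>M \<partial>M)
      = (\<integral>\<^sup>+x. ennreal (g x) * ?F + ennreal (f x) * ?G \<partial>M)"
    unfolding split by (simp add: nn_integral_add nn_integral_cmult)
  also have "\<dots> = ?G * ?F + ?F * ?G"
    by (simp add: nn_integral_add nn_integral_multc)
  finally show ?thesis
    by (simp add: algebra_simps mult_2)
qed

lemma fstar_double_integral_le:
  assumes c: "1/2 < c" and \<delta>: "0 < \<delta>" and n: "1 \<le> n"
    and l: "0 < l1" "0 < l2" "0 < l3" "0 < l4" "l1 + l2 + l3 + l4 = l"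
  defines "C \<equiv> 2 * c * (\<delta> powr (1 - 2 * c) / (2 * c - 1))"
    and "E \<equiv> (V n powr (2 * c)) ^ l * (\<delta> powr (-2 * c)) ^ (l - 2)"
  shows "(\<integral>\<^sup>+ x1. \<integral>\<^sup>+ x2.
              ennreal (fstar n c \<delta> x1 ^ l1 * fstar n c \<delta> x2 ^ l2 *
                       fstar n c \<delta> (vadd x1 x2) ^ l3 * fstar n c \<delta> (vsub x1 x2) ^ l4)
            \<partial>lebesgue_n n \<partial>lebesgue_n n)
       \<le> ennreal (2 * E * C * (C / sqrt 2 ^ n))"
proof -
  let ?M = "lebesgue_n n"
  define g where "g x = fstar_profile n c \<delta> (enorm_n n x)" for x
  define h where "h x = fstar_profile n c \<delta> (sqrt 2 * enorm_n n x)" for x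
  have [measurable]: "g \<in> borel_measurable ?M" "h \<in> borel_measurable ?M"
    unfolding g_def h_def fstar_profile_def by measurable
  have g: "0 \<le> g x" and h: "0 \<le> h x" for x
    unfolding g_def h_def using fstar_profile_pos[OF \<delta>] enorm_n_nonneg by (simp_all add: less_imp_le)
  have E: "0 \<le> E"
    by (simp add: E_def)
  have C: "0 \<le> C"
    using c by (simp add: C_def)
  have int_g: "(\<integral>\<^sup>+x. g x \<partial>?M) \<le> ennreal C"
    using nn_integral_lebesgue_n_radial_powr_le[OF n, of 1 "2 * c" \<delta>] c \<delta>
    by (simp add: g_def fstar_profile_def C_def)
  have int_h: "(\<integral>\<^sup>+x. h x \<partial>?M) \<le> ennreal (C / sqrt 2 ^ n)"
    using nn_integral_lebesgue_n_radial_powr_le[OF n, of "sqrt 2" "2 * c" \<delta>] c \<delta>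
    by (simp add: h_def fstar_profile_def C_def mult.commute)
  have int_Eg: "(\<integral>\<^sup>+x. ennreal (E * g x) \<partial>?M) = ennreal E * (\<integral>\<^sup>+x. g x \<partial>?M)"
    using E g by (simp add: ennreal_mult nn_integral_cmult)
  have "(\<integral>\<^sup>+ x1. \<integral>\<^sup>+ x2.
              ennreal (fstar n c \<delta> x1 ^ l1 * fstar n c \<delta> x2 ^ l2 *
                       fstar n c \<delta> (vadd x1 x2) ^ l3 * fstar n c \<delta> (vsub x1 x2) ^ l4) \<partial>?M \<partial>?M)
      \<le> (\<integral>\<^sup>+ x1. \<integral>\<^sup>+ x2. ennreal ((E * g x2) * h x1 + (E * g x1) * h x2) \<partial>?M \<partial>?M)"
    using fstar_product_le[OF _ \<delta> n l] c
    by (intro nn_integral_mono ennreal_leI) (simp add: E_def g_def h_def algebra_simps)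
  also have "\<dots> = 2 * (ennreal E * (\<integral>\<^sup>+x. g x \<partial>?M)) * (\<integral>\<^sup>+x. h x \<partial>?M)"
    unfolding int_Eg[symmetric] using E g h by (intro nn_integral_symmetric_product) auto
  also have "\<dots> \<le> 2 * (ennreal E * ennreal C) * ennreal (C / sqrt 2 ^ n)"
    by (rule mult_mono[OF mult_left_mono[OF mult_left_mono[OF int_g]] int_h]) auto
  also have "\<dots> = ennreal (2 * E * C * (C / sqrt 2 ^ n))"
    using E C by (simp add: ennreal_mult'[symmetric] mult.assoc)
      (metis ennreal_mult' ennreal_numeral times_divide_eq_right zero_le_numeral)
  finally show ?thesis .
qed

lemma fstar_integral_le:
  assumes c: "1/2 < c" and \<delta>: "0 < \<delta>" and n: "1 \<le> n"
    and l: "0 < l1" "0 < l2" "0 < l3" "0 < l4" "l1 + l2 + l3 + l4 = l"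
  defines "C \<equiv> 2 * c * (\<delta> powr (1 - 2 * c) / (2 * c - 1))"
  shows "ennreal (V n powr (-2 * real l * c)) *
          (\<integral>\<^sup>+ x1. \<integral>\<^sup>+ x2.
              ennreal (fstar n c \<delta> x1 ^ l1 * fstar n c \<delta> x2 ^ l2 *
                       fstar n c \<delta> (vadd x1 x2) ^ l3 * fstar n c \<delta> (vsub x1 x2) ^ l4)
            \<partial>lebesgue_n n \<partial>lebesgue_n n)
       \<le> ennreal (2 * (\<delta> powr (-2 * c)) ^ (l - 2) * C\<^sup>2 * (1 / sqrt 2) ^ n)"
proof -
  define E where "E = (V n powr (2 * c)) ^ l * (\<delta> powr (-2 * c)) ^ (l - 2)"
  have V_cancel: "V n powr (-2 * real l * c) * (V n powr (2 * c)) ^ l = 1"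
    using V_pos[of n] by (simp add: powr_power powr_add[symmetric])
  have "ennreal (V n powr (-2 * real l * c)) * (\<integral>\<^sup>+ x1. \<integral>\<^sup>+ x2.
              ennreal (fstar n c \<delta> x1 ^ l1 * fstar n c \<delta> x2 ^ l2 *
                       fstar n c \<delta> (vadd x1 x2) ^ l3 * fstar n c \<delta> (vsub x1 x2) ^ l4)
            \<partial>lebesgue_n n \<partial>lebesgue_n n)
      \<le> ennreal (V n powr (-2 * real l * c)) * ennreal (2 * E * C * (C / sqrt 2 ^ n))"
    unfolding E_def C_def by (rule mult_left_mono[OF fstar_double_integral_le[OF c \<delta> n l]]) simp
  also have "\<dots> = ennreal (V n powr (-2 * real l * c) * (2 * E * C * (C / sqrt 2 ^ n)))"
    by (rule ennreal_mult'[symmetric]) simp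
  also have "V n powr (-2 * real l * c) * (2 * E * C * (C / sqrt 2 ^ n))
           = 2 * (\<delta> powr (-2 * c)) ^ (l - 2) * C\<^sup>2 * (1 / sqrt 2) ^ n"
    using V_cancel by (simp add: E_def power_one_over power2_eq_square field_simps)
  finally show ?thesis .
qed

theorem proposition5p3:
  fixes c \<delta> :: real and l :: nat
  assumes "c > 1/2" and "\<delta> > 0" and "l \<ge> 4"
  shows "\<exists>K \<rho>. K > 0 \<and> 0 < \<rho> \<and> \<rho> < 1 \<and>
    (\<forall>l1 l2 l3 l4 :: nat. l1 > 0 \<longrightarrow> l2 > 0 \<longrightarrow> l3 > 0 \<longrightarrow> l4 > 0 \<longrightarrow>
       l1 + l2 + l3 + l4 = l \<longrightarrow>
       (\<forall>n::nat. n \<ge> 1 \<longrightarrow>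
          ennreal (V n powr (-2 * real l * c)) *
          (\<integral>\<^sup>+ x1. \<integral>\<^sup>+ x2.
              ennreal (fstar n c \<delta> x1 ^ l1 * fstar n c \<delta> x2 ^ l2 *
                       fstar n c \<delta> (vadd x1 x2) ^ l3 * fstar n c \<delta> (vsub x1 x2) ^ l4)
            \<partial>lebesgue_n n \<partial>lebesgue_n n)
          \<le> ennreal (K * \<rho> ^ n)))"
proof -
  define C where "C = 2 * c * (\<delta> powr (1 - 2 * c) / (2 * c - 1))"
  define K where "K = 2 * (\<delta> powr (-2 * c)) ^ (l - 2) * C\<^sup>2"
  have "0 < C"
    using assms by (simp add: C_def)
  then have "0 < K"
    using assms by (simp add: K_def)
  show ?thesis
  proof (rule exI[of _ K], rule exI[of _ "1 / sqrt 2"], intro conjI allI impI)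
    fix l1 l2 l3 l4 n :: nat
    assume "0 < l1" "0 < l2" "0 < l3" "0 < l4" "l1 + l2 + l3 + l4 = l" "1 \<le> n"
    then show "ennreal (V n powr (-2 * real l * c)) *
        (\<integral>\<^sup>+ x1. \<integral>\<^sup>+ x2.
            ennreal (fstar n c \<delta> x1 ^ l1 * fstar n c \<delta> x2 ^ l2 *
                     fstar n c \<delta> (vadd x1 x2) ^ l3 * fstar n c \<delta> (vsub x1 x2) ^ l4)
          \<partial>lebesgue_n n \<partial>lebesgue_n n)
        \<le> ennreal (K * (1 / sqrt 2) ^ n)"
      using fstar_integral_le[OF assms(1,2), of n l1 l2 l3 l4 l] by (simp add: K_def C_def)
  qed (use \<open>0 < K\<close> in simp_all)
qed

end
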